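(* Let $0<q<1$. Define the $q$-Hermite polynomials $H_{n,q}(x)$ by \[ H_q(t)\,e_q(tx)=\sum_{n=0}^\infty H_{n,q}(x)\frac{t^n}{[n]_q!},\qquad H_q(t)=\sum_{n=0}^\infty(-1)^nq^{n(n-1)}\frac{t^{2n}}{[2n]_q!!}. \] Then for every integer $n\ge0$, $H_{n,q}(x)$ satisfies the $q$-difference equation \[ q^{n-2}D_{q,x}^2H_{n,q}(x)-xq^nD_{q,x}H_{n,q}(x)+[n]_qH_{n,q}(qx)=0. \]
   Context: $[n]_q=\frac{1-q^n}{1-q}$, $[0]_q!=1$, $[n]_q!=[n]_q\cdots[1]_q$, $[0]_q!!=1$, $[2n]_q!!=[2n]_q[2n-2]_q\cdots[2]_q$, $e_q(t)=\sum_{n\ge0}\frac{t^n}{[n]_q!}$. The $q$-derivative is $D_{q,x}f(x)=\frac{f(qx)-f(x)}{(q-1)x}$ (on polynomials $D_{q,x}x^n=[n]_qx^{n-1}$), and $D_{q,x}^2=D_{q,x}\circ D_{q,x}$. *)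

theory Defs
  imports "HOL-Computational_Algebra.Computational_Algebra"
begin

definition qint :: "real \<Rightarrow> nat \<Rightarrow> real" where
  "qint q n = (1 - q ^ n) / (1 - q)"

definition qfact :: "real \<Rightarrow> nat \<Rightarrow> real" where
  "qfact q n = (\<Prod>i = 1..n. qint q i)"

definition qdfact_even :: "real \<Rightarrow> nat \<Rightarrow> real" where
  "qdfact_even q m = (\<Prod>i = 1..m. qint q (2 * i))"

text \<open>e_q(t x) as a formal power series in t with coefficients polynomials in x:
  coefficient of t^n is x^n / [n]_q!.\<close>
definition eq_fps :: "real \<Rightarrow> real poly fps" where
  "eq_fps q = Abs_fps (\<lambda>n. monom (1 / qfact q n) n)"

definition Hq_fps :: "real \<Rightarrow> real poly fps" where
  "Hq_fps q = Abs_fps (\<lambda>k. if even k then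
       [: (-1) ^ (k div 2) * q ^ ((k div 2) * (k div 2 - 1)) / qdfact_even q (k div 2) :]
     else 0)"

definition qHermite :: "real \<Rightarrow> nat \<Rightarrow> real poly" where
  "qHermite q n = smult (qfact q n) (fps_nth (Hq_fps q * eq_fps q) n)"

text \<open>q-derivative on polynomials: D_q x^k = [k]_q x^(k-1), extended linearly
  (agrees with (f(qx) - f(x))/((q-1)x) for x \<noteq> 0).\<close>
definition qD :: "real \<Rightarrow> real poly \<Rightarrow> real poly" where
  "qD q p = (\<Sum>k\<le>degree p. monom (coeff p k * qint q k) (k - 1))"

end

theory Submission
  imports Defs
begin

text \<open>Comparing coefficients of x^j, the equation says
  q^(n-2) [j+1][j+2] c(j+2) = (q^n [j] - q^j [n]) c(j) = - q^j [n-j] c(j)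
  for the coefficients c(j) = [n]!/[j]! a((n-j)/2) of H_(n,q), where a(k) is the coefficient
  of t^(2k) in H_q(t). Both sides vanish unless n - j is even, and then the identity is just
  the ratio a(k+1)/a(k) = - q^(2k)/[2k+2].\<close>

lemma qint_0 [simp]: "qint q 0 = 0"
  by (simp add: qint_def)

lemma qint_pos: "0 < q \<Longrightarrow> q < 1 \<Longrightarrow> 0 < k \<Longrightarrow> 0 < qint q k"
  unfolding qint_def using power_strict_decreasing[of 0 k q] by auto

lemma qint_diff:
  assumes "j \<le> n"
  shows "qint q n * q ^ j - q ^ n * qint q j = q ^ j * qint q (n - j)"
proof -
  obtain k where n: "n = j + k"
    using assms le_Suc_ex by blast
  show ?thesis
    unfolding n qint_def by (simp add: power_add diff_divide_distrib algebra_simps)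
qed

lemma qfact_Suc: "qfact q (Suc n) = qfact q n * qint q (Suc n)"
  by (simp add: qfact_def)

lemma qdfact_even_Suc: "qdfact_even q (Suc n) = qdfact_even q n * qint q (2 * Suc n)"
  by (simp add: qdfact_even_def)

lemma qfact_pos: "0 < q \<Longrightarrow> q < 1 \<Longrightarrow> 0 < qfact q k"
  unfolding qfact_def by (rule prod_pos) (auto intro: qint_pos)

lemma coeff_qD: "coeff (qD q p) j = coeff p (Suc j) * qint q (Suc j)"
proof -
  have "coeff (qD q p) j = (\<Sum>k\<le>degree p. if k = Suc j then coeff p k * qint q k else 0)"
    unfolding qD_def coeff_sum coeff_monom
  proof (intro sum.cong refl)
    fix k
    show "(if k - 1 = j then coeff p k * qint q k else 0)
        = (if k = Suc j then coeff p k * qint q k else 0)"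
      by (cases k) auto
  qed
  also have "\<dots> = coeff p (Suc j) * qint q (Suc j)"
    using coeff_eq_0[of p "Suc j"] by auto
  finally show ?thesis .
qed

definition Hq_coeff :: "real \<Rightarrow> nat \<Rightarrow> real" where
  "Hq_coeff q k = (-1) ^ k * q ^ (k * (k - 1)) / qdfact_even q k"

definition qHermite_coeff :: "real \<Rightarrow> nat \<Rightarrow> nat \<Rightarrow> real" where
  "qHermite_coeff q n j =
     (if j \<le> n \<and> even (n - j) then qfact q n / qfact q j * Hq_coeff q ((n - j) div 2) else 0)"

lemma coeff_qHermite: "coeff (qHermite q n) j = qHermite_coeff q n j"
proof -
  have "coeff (fps_nth (Hq_fps q * eq_fps q) n) j =
     (\<Sum>i=0..n. if i = n - j \<and> j \<le> n then
        (if even i then Hq_coeff q (i div 2) else 0) * (1 / qfact q j) else 0)"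
    unfolding fps_mult_nth coeff_sum Hq_fps_def eq_fps_def fps_nth_Abs_fps
    by (rule sum.cong) (auto simp: Hq_coeff_def)
  also have "\<dots> = (if j \<le> n then (if even (n - j) then Hq_coeff q ((n - j) div 2) else 0) * (1 / qfact q j) else 0)"
    by (simp add: conj_commute)
  finally have "coeff (fps_nth (Hq_fps q * eq_fps q) n) j = \<dots>" .
  then show ?thesis
    unfolding qHermite_def qHermite_coeff_def coeff_smult by simp
qed

lemma Hq_coeff_Suc:
  assumes "0 < q" "q < 1"
  shows "qint q (2 * Suc k) * Hq_coeff q (Suc k) = - (q ^ (2 * k) * Hq_coeff q k)"
proof -
  have "Suc k * (Suc k - 1) = k * (k - 1) + 2 * k"
    by (cases k) auto
  then have "q ^ (Suc k * (Suc k - 1)) = q ^ (k * (k - 1)) * q ^ (2 * k)"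
    by (simp only: power_add)
  moreover have "qint q (2 * Suc k) \<noteq> 0"
    using qint_pos[OF assms, of "2 * Suc k"] by simp
  ultimately show ?thesis
    by (simp add: Hq_coeff_def qdfact_even_Suc)
qed

lemma qHermite_coeff_Suc_Suc:
  assumes q: "0 < q" "q < 1"
  shows "q powi (int n - 2) * qint q (Suc j) * qint q (Suc (Suc j)) * qHermite_coeff q n (Suc (Suc j))
     = - (q ^ j * qint q (n - j) * qHermite_coeff q n j)"
proof (cases "Suc (Suc j) \<le> n \<and> even (n - j)")
  case False
  then have "qHermite_coeff q n (Suc (Suc j)) = 0"
    by (auto simp: qHermite_coeff_def)
  moreover have "qint q (n - j) * qHermite_coeff q n j = 0"
  proof (cases "j \<le> n \<and> even (n - j)")
    case True
    with False have "j = n"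
      by presburger
    then show ?thesis
      by simp
  next
    case False
    then show ?thesis
      unfolding qHermite_coeff_def if_not_P[OF False] by simp
  qed
  ultimately show ?thesis
    by simp
next
  case True
  then obtain d where d: "n - j = 2 * d"
    by (meson evenE)
  with True obtain k where "d = Suc k"
    by (cases d) auto
  with d True have n: "n = Suc (Suc (j + 2 * k))"
    by simp
  have powi: "q powi (int n - 2) = q ^ (j + 2 * k)"
  proof -
    have "int n - 2 = int (j + 2 * k)"
      using n by simp
    then show ?thesis
      by (metis power_int_of_nat)
  qed
  have "qfact q (Suc (Suc j)) = qfact q j * qint q (Suc j) * qint q (Suc (Suc j))"
    by (simp add: qfact_Suc)
  moreover have "0 < qint q (Suc j)" "0 < qint q (Suc (Suc j))" "0 < qfact q j"
    using qint_pos[OF q] qfact_pos[OF q] by auto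
  ultimately have "q powi (int n - 2) * qint q (Suc j) * qint q (Suc (Suc j)) * qHermite_coeff q n (Suc (Suc j))
      = q ^ j * (qfact q n / qfact q j) * (q ^ (2 * k) * Hq_coeff q k)"
    unfolding powi using n by (simp add: qHermite_coeff_def power_add field_simps)
  also have "\<dots> = - (q ^ j * (qfact q n / qfact q j) * (qint q (2 * Suc k) * Hq_coeff q (Suc k)))"
    unfolding Hq_coeff_Suc[OF q] by simp
  also have "\<dots> = - (q ^ j * qint q (n - j) * qHermite_coeff q n j)"
    using n by (simp add: qHermite_coeff_def)
  finally show ?thesis .
qed

theorem theorem11:
  fixes q :: real and n :: nat
  assumes "0 < q" and "q < 1"
  shows "smult (q powi (int n - 2)) (qD q (qD q (qHermite q n)))
           - [:0, 1:] * smult (q ^ n) (qD q (qHermite q n))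
           + smult (qint q n) (pcompose (qHermite q n) [:0, q:]) = 0"
proof (rule poly_eqI)
  fix j
  let ?c = "qHermite_coeff q n"
  have shift: "coeff ([:0, 1:] * smult (q ^ n) (qD q (qHermite q n))) j = q ^ n * (qint q j * ?c j)"
    by (cases j) (simp_all add: coeff_qD coeff_qHermite)
  have "(qint q n * q ^ j - q ^ n * qint q j - q ^ j * qint q (n - j)) * ?c j = 0"
    by (cases "j \<le> n") (simp_all add: qint_diff qHermite_coeff_def)
  then show "coeff (smult (q powi (int n - 2)) (qD q (qD q (qHermite q n)))
           - [:0, 1:] * smult (q ^ n) (qD q (qHermite q n))
           + smult (qint q n) (pcompose (qHermite q n) [:0, q:])) j = coeff 0 j"
    using qHermite_coeff_Suc_Suc[OF assms, of n j]
    by (simp only: coeff_add coeff_diff coeff_smult shift coeff_qD coeff_qHermite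
        coeff_pcompose_linear coeff_0) (simp add: algebra_simps)
qed

end
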